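(* Consider the store-and-forward packet routing problem on the uni-directional line with $n$ nodes, buffer size $B=0$ at every node and uniform link capacity $c\ge 1$. The nearest-to-go policy is an optimal policy: for every input sequence $\sigma$ of packet requests, the number of packets it delivers equals the maximum throughput achievable on $\sigma$.
   Context: Store-and-forward packet routing model on the uni-directional line $v_1\to v_2\to\cdots\to v_n$: each edge can carry at most $c$ packets per time step and traversing an edge takes one time step; since $B=0$, nodes cannot store packets. Each packet request $r_i=(a_i,b_i,t_i,d_i)$ has source $a_i$, destination $b_i$ equal to $a_i$ or a later node of the path, input time $t_i$ (the packet is input at $a_i$ at time $t_i$ via a local input; any number of packets may be input to a node in a step), and a deadline $d_i$ that is feasible, i.e. $d_i \ge t_i + \mathrm{dist}(a_i,b_i)$ (possibly $d_i=\infty$). In each time step, each node removes (delivers) the packets destined to it, forwards at most $c$ of the remaining present packets (those arriving along the incoming edge and those input locally) along its outgoing edge, and deletes the rest. Throughput = number of packets delivered by their deadline. The nearest-to-go policy: at each node and time step, among the present packets not destined to the node, forward the (at most) $c$ packets whose destinations are nearest to the node and delete the others. *)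

theory Defs
  imports Main "HOL-Library.Extended_Nat"
begin

(* A packet request (a, b, t, d): source node a, destination node b,
   input time t, deadline d (enat, \<infinity> allowed).
   Nodes of the line are 0, ..., n-1; edge v carries packets from v to v+1. *)
record request =
  src :: nat
  dst :: nat
  tin :: nat
  ddl :: enat

definition dist :: "request \<Rightarrow> nat" where
  "dist r = dst r - src r"

definition valid_request :: "nat \<Rightarrow> request \<Rightarrow> bool" where
  "valid_request n r \<longleftrightarrow> src r \<le> dst r \<and> dst r < n \<and> enat (tin r + dist r) \<le> ddl r"

(* With B = 0 a packet can never wait: packet i, if still alive, is at node
   src + k at time tin + k.  A schedule (run of an arbitrary policy) is thus
   described by h i = number of edges packet i traverses before it is
   delivered (h i = dist) or deleted (h i < dist). *)

definition present :: "request list \<Rightarrow> (nat \<Rightarrow> nat) \<Rightarrow> nat \<Rightarrow> nat \<Rightarrow> nat \<Rightarrow> bool" where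
  "present \<sigma> h v \<tau> i \<longleftrightarrow> i < length \<sigma> \<and> src (\<sigma>!i) \<le> v \<and>
     \<tau> = tin (\<sigma>!i) + (v - src (\<sigma>!i)) \<and> v - src (\<sigma>!i) \<le> h i"

definition eligible :: "request list \<Rightarrow> (nat \<Rightarrow> nat) \<Rightarrow> nat \<Rightarrow> nat \<Rightarrow> nat set" where
  "eligible \<sigma> h v \<tau> = {i. present \<sigma> h v \<tau> i \<and> dst (\<sigma>!i) \<noteq> v}"

definition forwarded :: "request list \<Rightarrow> (nat \<Rightarrow> nat) \<Rightarrow> nat \<Rightarrow> nat \<Rightarrow> nat set" where
  "forwarded \<sigma> h v \<tau> = {i. present \<sigma> h v \<tau> i \<and> v - src (\<sigma>!i) < h i}"

definition feasible_schedule :: "nat \<Rightarrow> request list \<Rightarrow> (nat \<Rightarrow> nat) \<Rightarrow> bool" where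
  "feasible_schedule c \<sigma> h \<longleftrightarrow>
     (\<forall>i < length \<sigma>. h i \<le> dist (\<sigma>!i)) \<and>
     (\<forall>v \<tau>. card (forwarded \<sigma> h v \<tau>) \<le> c)"

(* packets delivered by their deadline; packet i reaches dst at time tin + dist *)
definition throughput :: "request list \<Rightarrow> (nat \<Rightarrow> nat) \<Rightarrow> nat" where
  "throughput \<sigma> h = card {i. i < length \<sigma> \<and> h i = dist (\<sigma>!i) \<and>
                                enat (tin (\<sigma>!i) + dist (\<sigma>!i)) \<le> ddl (\<sigma>!i)}"

definition opt_throughput :: "nat \<Rightarrow> request list \<Rightarrow> nat" where
  "opt_throughput c \<sigma> = Max {throughput \<sigma> h | h. feasible_schedule c \<sigma> h}"

definition ntg_run :: "nat \<Rightarrow> request list \<Rightarrow> (nat \<Rightarrow> nat) \<Rightarrow> bool" where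
  "ntg_run c \<sigma> h \<longleftrightarrow> feasible_schedule c \<sigma> h \<and>
     (\<forall>v \<tau>. card (forwarded \<sigma> h v \<tau>) = min c (card (eligible \<sigma> h v \<tau>)) \<and>
        (\<forall>i \<in> forwarded \<sigma> h v \<tau>. \<forall>j \<in> eligible \<sigma> h v \<tau> - forwarded \<sigma> h v \<tau>.
            dst (\<sigma>!i) \<le> dst (\<sigma>!j)))"

end

theory Submission
  imports Defs
begin

text \<open>Without buffers a live packet is at node \<open>src + k\<close> at time \<open>tin + k\<close>, so two packets
  can only compete for an edge if they lie on the same diagonal \<open>tin - src\<close>. A nearest-to-go
  run is built node by node from left to right: on a uni-directional line the decisions at a
  node only affect the nodes after it. Optimality is an exchange argument on a fixed diagonal.
  By induction along the line, for every node \<open>v\<close> and bound \<open>u\<close>, nearest-to-go brings at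
  least as many packets with source before \<open>v\<close> and destination at most \<open>u\<close> to node \<open>v\<close> (or
  delivers them earlier) as any feasible schedule does: if nearest-to-go drops such a packet
  at an edge, it forwards \<open>c\<close> packets there, all with destination at most \<open>u\<close>, while the other
  schedule forwards at most \<open>c\<close>.\<close>

lemma exists_subset_of_least:
  fixes f :: "'a \<Rightarrow> 'b::linorder"
  assumes "finite E" and "k \<le> card E"
  shows "\<exists>X\<subseteq>E. card X = k \<and> (\<forall>i\<in>X. \<forall>j\<in>E - X. f i \<le> f j)"
  using assms(2)
proof (induction k)
  case 0
  show ?case by (intro exI[of _ "{}"]) auto
next
  case (Suc k)
  then obtain X where X: "X \<subseteq> E" "card X = k" "\<forall>i\<in>X. \<forall>j\<in>E - X. f i \<le> f j"
    by (meson Suc_leD)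
  have "finite X" using X(1) assms(1) finite_subset by blast
  have fin: "finite (E - X)" using assms(1) by simp
  have ne: "E - X \<noteq> {}"
  proof
    assume "E - X = {}"
    then have "card E \<le> card X" using card_mono[OF \<open>finite X\<close>] by blast
    then show False using Suc.prems X(2) by simp
  qed
  define y where "y = arg_min_on f (E - X)"
  have y: "y \<in> E - X" unfolding y_def by (rule arg_min_if_finite(1)[OF fin ne])
  have y_least: "f y \<le> f z" if "z \<in> E - X" for z
    unfolding y_def using arg_min_least[OF fin ne that] .
  have "insert y X \<subseteq> E" and "card (insert y X) = Suc k"
    using X(1,2) y \<open>finite X\<close> by auto
  moreover have "\<forall>i\<in>insert y X. \<forall>j\<in>E - insert y X. f i \<le> f j"
    using X(3) y_least by blast
  ultimately show ?case by blast
qed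

definition nearest_to_go :: "nat \<Rightarrow> request list \<Rightarrow> nat set \<Rightarrow> nat set" where
  "nearest_to_go c \<sigma> E = (SOME X. X \<subseteq> E \<and> card X = min c (card E) \<and>
      (\<forall>i\<in>X. \<forall>j\<in>E - X. dst (\<sigma>!i) \<le> dst (\<sigma>!j)))"

lemma nearest_to_go:
  assumes "finite E"
  shows "nearest_to_go c \<sigma> E \<subseteq> E" and "card (nearest_to_go c \<sigma> E) = min c (card E)"
    and "\<forall>i\<in>nearest_to_go c \<sigma> E. \<forall>j\<in>E - nearest_to_go c \<sigma> E. dst (\<sigma>!i) \<le> dst (\<sigma>!j)"
proof -
  have "\<exists>X\<subseteq>E. card X = min c (card E) \<and> (\<forall>i\<in>X. \<forall>j\<in>E - X. dst (\<sigma>!i) \<le> dst (\<sigma>!j))"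
    using exists_subset_of_least[OF assms, of "min c (card E)" "\<lambda>i. dst (\<sigma>!i)"] by simp
  then have "nearest_to_go c \<sigma> E \<subseteq> E \<and> card (nearest_to_go c \<sigma> E) = min c (card E) \<and>
      (\<forall>i\<in>nearest_to_go c \<sigma> E. \<forall>j\<in>E - nearest_to_go c \<sigma> E. dst (\<sigma>!i) \<le> dst (\<sigma>!j))"
    unfolding nearest_to_go_def by (rule someI_ex)
  then show "nearest_to_go c \<sigma> E \<subseteq> E" and "card (nearest_to_go c \<sigma> E) = min c (card E)"
    and "\<forall>i\<in>nearest_to_go c \<sigma> E. \<forall>j\<in>E - nearest_to_go c \<sigma> E. dst (\<sigma>!i) \<le> dst (\<sigma>!j)"
    by blast+
qed

lemma valid_requestsD:
  assumes "\<forall>r\<in>set \<sigma>. valid_request n r" and "i < length \<sigma>"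
  shows "src (\<sigma>!i) \<le> dst (\<sigma>!i)" and "dst (\<sigma>!i) < n"
    and "enat (tin (\<sigma>!i) + dist (\<sigma>!i)) \<le> ddl (\<sigma>!i)"
  using assms nth_mem unfolding valid_request_def by blast+

lemma finite_eligible [simp]: "finite (eligible \<sigma> g v \<tau>)"
  by (rule finite_subset[of _ "{..<length \<sigma>}"]) (auto simp: eligible_def present_def)

lemma finite_forwarded [simp]: "finite (forwarded \<sigma> g v \<tau>)"
  by (rule finite_subset[of _ "{..<length \<sigma>}"]) (auto simp: forwarded_def present_def)

lemma forwarded_subset_eligible:
  assumes "\<And>i. i < length \<sigma> \<Longrightarrow> g i \<le> dist (\<sigma>!i)"
  shows "forwarded \<sigma> g v \<tau> \<subseteq> eligible \<sigma> g v \<tau>"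
  using assms by (fastforce simp: forwarded_def eligible_def present_def dist_def)

lemma present_imp_le_dst:
  assumes "present \<sigma> g v \<tau> i" and "g i \<le> dist (\<sigma>!i)" and "src (\<sigma>!i) \<le> dst (\<sigma>!i)"
  shows "v \<le> dst (\<sigma>!i)"
  using assms by (auto simp: present_def dist_def)

text \<open>What happens at node \<open>v\<close> only depends on how far each packet gets up to node \<open>v + 1\<close>.\<close>

lemma present_forwarded_cong:
  assumes "\<And>i. src (\<sigma>!i) \<le> v \<Longrightarrow>
    min (g i) (Suc (v - src (\<sigma>!i))) = min (g' i) (Suc (v - src (\<sigma>!i)))"
  shows "present \<sigma> g v \<tau> = present \<sigma> g' v \<tau>" and "forwarded \<sigma> g v \<tau> = forwarded \<sigma> g' v \<tau>"
proof -
  have "(v - src (\<sigma>!i) \<le> g i \<longleftrightarrow> v - src (\<sigma>!i) \<le> g' i) \<and>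
      (v - src (\<sigma>!i) < g i \<longleftrightarrow> v - src (\<sigma>!i) < g' i)" if "src (\<sigma>!i) \<le> v" for i
    using assms[OF that] by (auto simp: min_def split: if_splits)
  then show "present \<sigma> g v \<tau> = present \<sigma> g' v \<tau>"
    and "forwarded \<sigma> g v \<tau> = forwarded \<sigma> g' v \<tau>"
    unfolding fun_eq_iff present_def forwarded_def by blast+
qed

definition ntg_drops :: "nat \<Rightarrow> request list \<Rightarrow> (nat \<Rightarrow> nat) \<Rightarrow> nat \<Rightarrow> nat \<Rightarrow> bool" where
  "ntg_drops c \<sigma> g v i \<longleftrightarrow> i \<in> eligible \<sigma> g v (tin (\<sigma>!i) + (v - src (\<sigma>!i))) \<and>
      i \<notin> nearest_to_go c \<sigma> (eligible \<sigma> g v (tin (\<sigma>!i) + (v - src (\<sigma>!i))))"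

text \<open>\<open>ntg_prefix c \<sigma> v\<close> runs nearest-to-go at the nodes before \<open>v\<close> and lets every surviving
  packet travel to its destination from node \<open>v\<close> on.\<close>

primrec ntg_prefix :: "nat \<Rightarrow> request list \<Rightarrow> nat \<Rightarrow> nat \<Rightarrow> nat" where
  "ntg_prefix c \<sigma> 0 i = dist (\<sigma>!i)"
| "ntg_prefix c \<sigma> (Suc v) i =
    (if ntg_drops c \<sigma> (ntg_prefix c \<sigma> v) v i then v - src (\<sigma>!i) else ntg_prefix c \<sigma> v i)"

lemma ntg_dropsD:
  assumes "ntg_drops c \<sigma> g v i"
  shows "src (\<sigma>!i) \<le> v" and "v - src (\<sigma>!i) \<le> g i"
  using assms by (auto simp: ntg_drops_def eligible_def present_def)

lemma ntg_prefix_le_dist: "ntg_prefix c \<sigma> v i \<le> dist (\<sigma>!i)"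
  by (induction v) (auto dest: ntg_dropsD)

lemma ntg_prefix_dist_or_dropped:
  "ntg_prefix c \<sigma> v i = dist (\<sigma>!i) \<or> src (\<sigma>!i) + ntg_prefix c \<sigma> v i < v"
  by (induction v) (auto dest: ntg_dropsD)

lemma min_ntg_prefix_stable:
  assumes "src (\<sigma>!i) \<le> w" and "Suc w \<le> N"
  shows "min (ntg_prefix c \<sigma> N i) (Suc (w - src (\<sigma>!i))) =
    min (ntg_prefix c \<sigma> (Suc w) i) (Suc (w - src (\<sigma>!i)))"
  using assms(2)
proof (induction N rule: dec_induct)
  case (step m)
  show ?case
  proof (cases "ntg_drops c \<sigma> (ntg_prefix c \<sigma> m) m i")
    case True
    then have "m - src (\<sigma>!i) \<le> ntg_prefix c \<sigma> m i" by (rule ntg_dropsD)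
    moreover have "Suc (w - src (\<sigma>!i)) \<le> m - src (\<sigma>!i)" using assms(1) step.hyps(1) by linarith
    ultimately have "min (ntg_prefix c \<sigma> (Suc m) i) (Suc (w - src (\<sigma>!i))) =
        min (ntg_prefix c \<sigma> m i) (Suc (w - src (\<sigma>!i)))"
      using True by (simp add: min_absorb2)
    then show ?thesis using step.IH by (rule trans)
  next
    case False
    then show ?thesis using step.IH by simp
  qed
qed simp

lemma ntg_prefix_final_at_node:
  assumes "v < N"
  shows "present \<sigma> (ntg_prefix c \<sigma> N) v \<tau> = present \<sigma> (ntg_prefix c \<sigma> (Suc v)) v \<tau>"
    and "forwarded \<sigma> (ntg_prefix c \<sigma> N) v \<tau> = forwarded \<sigma> (ntg_prefix c \<sigma> (Suc v)) v \<tau>"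
  using assms min_ntg_prefix_stable[of \<sigma> _ v N c] by (auto intro!: present_forwarded_cong)

lemma present_ntg_prefix_Suc:
  "present \<sigma> (ntg_prefix c \<sigma> (Suc v)) v \<tau> = present \<sigma> (ntg_prefix c \<sigma> v) v \<tau>"
  by (auto simp: fun_eq_iff present_def dest: ntg_dropsD)

lemma forwarded_ntg_prefix_Suc:
  assumes "\<And>i. i < length \<sigma> \<Longrightarrow> src (\<sigma>!i) \<le> dst (\<sigma>!i)"
  shows "forwarded \<sigma> (ntg_prefix c \<sigma> (Suc v)) v \<tau> =
    nearest_to_go c \<sigma> (eligible \<sigma> (ntg_prefix c \<sigma> v) v \<tau>)"
proof -
  let ?g = "ntg_prefix c \<sigma> v"
  define E where "E = eligible \<sigma> ?g v \<tau>"
  have nearest_E: "nearest_to_go c \<sigma> E \<subseteq> E"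
    unfolding E_def by (rule nearest_to_go(1)[OF finite_eligible])
  have "i \<in> forwarded \<sigma> (ntg_prefix c \<sigma> (Suc v)) v \<tau> \<longleftrightarrow> i \<in> nearest_to_go c \<sigma> E" for i
  proof (cases "present \<sigma> ?g v \<tau> i")
    case False
    then have "i \<notin> forwarded \<sigma> (ntg_prefix c \<sigma> (Suc v)) v \<tau>" and "i \<notin> E"
      unfolding forwarded_def E_def eligible_def present_ntg_prefix_Suc by auto
    then show ?thesis using nearest_E by blast
  next
    case True
    then have i: "i < length \<sigma>" "src (\<sigma>!i) \<le> v" "\<tau> = tin (\<sigma>!i) + (v - src (\<sigma>!i))"
      "v - src (\<sigma>!i) \<le> ?g i"
      by (auto simp: present_def)
    have "?g i = dist (\<sigma>!i)"
      using ntg_prefix_dist_or_dropped[of c \<sigma> v i] i(2,4) by linarith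
    then have "v - src (\<sigma>!i) < ?g i \<longleftrightarrow> i \<in> E"
      using True i assms[OF i(1)] by (auto simp: E_def eligible_def dist_def)
    moreover have "ntg_drops c \<sigma> ?g v i \<longleftrightarrow> i \<in> E \<and> i \<notin> nearest_to_go c \<sigma> E"
      using i(3) by (simp add: ntg_drops_def E_def)
    ultimately show ?thesis
      using True present_ntg_prefix_Suc[of \<sigma> c v \<tau>] nearest_E
      by (auto simp: forwarded_def)
  qed
  then show ?thesis unfolding E_def by blast
qed

lemma forwarded_ntg_prefix:
  assumes "\<forall>r\<in>set \<sigma>. valid_request n r"
  shows "forwarded \<sigma> (ntg_prefix c \<sigma> n) v \<tau> =
    nearest_to_go c \<sigma> (eligible \<sigma> (ntg_prefix c \<sigma> n) v \<tau>)"
proof (cases "v < n")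
  case True
  then show ?thesis
    using ntg_prefix_final_at_node[OF True] present_ntg_prefix_Suc[of \<sigma> c v \<tau>]
      forwarded_ntg_prefix_Suc[OF valid_requestsD(1)[OF assms]]
    by (simp add: eligible_def)
next
  case False
  have "\<not> present \<sigma> (ntg_prefix c \<sigma> n) v \<tau> i" for i
  proof
    assume present: "present \<sigma> (ntg_prefix c \<sigma> n) v \<tau> i"
    then have "i < length \<sigma>" by (simp add: present_def)
    then have "v \<le> dst (\<sigma>!i)" and "dst (\<sigma>!i) < n"
      using present_imp_le_dst[OF present ntg_prefix_le_dist] valid_requestsD[OF assms] by auto
    then show False using False by simp
  qed
  then have "eligible \<sigma> (ntg_prefix c \<sigma> n) v \<tau> = {}" by (simp add: eligible_def)
  moreover have "forwarded \<sigma> (ntg_prefix c \<sigma> n) v \<tau> \<subseteq> eligible \<sigma> (ntg_prefix c \<sigma> n) v \<tau>"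
    by (rule forwarded_subset_eligible[OF ntg_prefix_le_dist])
  ultimately show ?thesis using nearest_to_go(1)[of "{}" c \<sigma>] by auto
qed

lemma ntg_run_ntg_prefix:
  assumes "\<forall>r\<in>set \<sigma>. valid_request n r"
  shows "ntg_run c \<sigma> (ntg_prefix c \<sigma> n)"
  unfolding ntg_run_def feasible_schedule_def forwarded_ntg_prefix[OF assms]
  using nearest_to_go[OF finite_eligible] ntg_prefix_le_dist by auto

definition diagonal :: "request \<Rightarrow> int" where
  "diagonal r = int (tin r) - int (src r)"

definition reaching :: "request list \<Rightarrow> (nat \<Rightarrow> nat) \<Rightarrow> nat \<Rightarrow> int \<Rightarrow> nat \<Rightarrow> nat set" where
  "reaching \<sigma> g v D u = {i. i < length \<sigma> \<and> diagonal (\<sigma>!i) = D \<and> src (\<sigma>!i) < v \<and>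
      dst (\<sigma>!i) \<le> u \<and> min (dst (\<sigma>!i)) v \<le> src (\<sigma>!i) + g i}"

lemma finite_reaching [simp]: "finite (reaching \<sigma> g v D u)"
  by (rule finite_subset[of _ "{..<length \<sigma>}"]) (auto simp: reaching_def)

lemma present_iff_on_diagonal:
  assumes "diagonal (\<sigma>!i) + int v = int \<tau>" and "i < length \<sigma>" and "src (\<sigma>!i) \<le> v"
  shows "present \<sigma> g v \<tau> i \<longleftrightarrow> v - src (\<sigma>!i) \<le> g i"
  using assms unfolding present_def diagonal_def by auto

lemma diagonal_if_present:
  assumes "present \<sigma> g v \<tau> i"
  shows "diagonal (\<sigma>!i) + int v = int \<tau>"
  using assms unfolding present_def diagonal_def by auto

lemma reaching_beyond_all_dst:
  assumes "\<And>i. i < length \<sigma> \<Longrightarrow> src (\<sigma>!i) \<le> dst (\<sigma>!i) \<and> dst (\<sigma>!i) < n \<and> f i \<le> dist (\<sigma>!i)"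
  shows "reaching \<sigma> f n D n = {i. i < length \<sigma> \<and> f i = dist (\<sigma>!i) \<and> diagonal (\<sigma>!i) = D}"
  using assms by (fastforce simp: reaching_def dist_def)

lemma card_eq_sum_card_fibres:
  assumes "finite A" and "finite T" and "f ` A \<subseteq> T"
  shows "card A = (\<Sum>y\<in>T. card {x\<in>A. f x = y})"
  using sum.group[OF assms, where h = "\<lambda>_. 1::nat"] by simp

locale ntg_vs_feasible =
  fixes \<sigma> :: "request list" and c :: nat and h g :: "nat \<Rightarrow> nat"
  assumes src_le_dst: "\<And>i. i < length \<sigma> \<Longrightarrow> src (\<sigma>!i) \<le> dst (\<sigma>!i)"
    and ntg: "ntg_run c \<sigma> h"
    and feasible: "feasible_schedule c \<sigma> g"
begin

lemma h_le_dist: "i < length \<sigma> \<Longrightarrow> h i \<le> dist (\<sigma>!i)"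
  using ntg unfolding ntg_run_def feasible_schedule_def by blast

lemma g_le_dist: "i < length \<sigma> \<Longrightarrow> g i \<le> dist (\<sigma>!i)"
  using feasible unfolding feasible_schedule_def by blast

lemma eligible_before_dst:
  assumes "i \<in> eligible \<sigma> h v \<tau>"
  shows "v < dst (\<sigma>!i)"
proof -
  have present: "present \<sigma> h v \<tau> i" and "dst (\<sigma>!i) \<noteq> v"
    using assms by (auto simp: eligible_def)
  moreover have "i < length \<sigma>" using present by (simp add: present_def)
  ultimately show ?thesis
    using present_imp_le_dst[OF present h_le_dist src_le_dst] by simp
qed

text \<open>Here every packet with destination at most \<open>u\<close> that nearest-to-go brings to node \<open>v\<close>,
  including those input there, gets past \<open>v\<close> or is delivered at \<open>v\<close>.\<close>

lemma card_reaching_Suc_unsaturated: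
  assumes IH: "card (reaching \<sigma> g v D u) \<le> card (reaching \<sigma> h v D u)"
    and \<tau>: "D + int v = int \<tau>"
    and not_dropped: "\<forall>j \<in> eligible \<sigma> h v \<tau> - forwarded \<sigma> h v \<tau>. u < dst (\<sigma>!j)"
  shows "card (reaching \<sigma> g (Suc v) D u) \<le> card (reaching \<sigma> h (Suc v) D u)"
proof -
  define new where "new = {i. i < length \<sigma> \<and> diagonal (\<sigma>!i) = D \<and> src (\<sigma>!i) = v \<and> dst (\<sigma>!i) \<le> u}"
  have "finite new" by (simp add: new_def)
  have "card (reaching \<sigma> g (Suc v) D u) \<le> card (reaching \<sigma> g v D u \<union> new)"
    by (rule card_mono) (auto simp: \<open>finite new\<close> reaching_def new_def)
  also have "\<dots> \<le> card (reaching \<sigma> g v D u) + card new" by (rule card_Un_le)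
  also have "\<dots> \<le> card (reaching \<sigma> h v D u) + card new" using IH by simp
  also have "\<dots> = card (reaching \<sigma> h v D u \<union> new)"
    by (rule card_Un_disjoint[symmetric]) (auto simp: \<open>finite new\<close> reaching_def new_def)
  also have "\<dots> \<le> card (reaching \<sigma> h (Suc v) D u)"
  proof (rule card_mono[OF finite_reaching], rule subsetI)
    fix i assume "i \<in> reaching \<sigma> h v D u \<union> new"
    then have i: "i < length \<sigma>" "diagonal (\<sigma>!i) = D" "src (\<sigma>!i) \<le> v" "dst (\<sigma>!i) \<le> u"
        "min (dst (\<sigma>!i)) v \<le> src (\<sigma>!i) + h i"
      by (auto simp: reaching_def new_def)
    have "min (dst (\<sigma>!i)) (Suc v) \<le> src (\<sigma>!i) + h i"
    proof (cases "dst (\<sigma>!i) \<le> v")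
      case False
      then have "present \<sigma> h v \<tau> i"
        using i present_iff_on_diagonal[of \<sigma> i v \<tau> h] \<tau> by auto
      then have "i \<in> eligible \<sigma> h v \<tau>" using False by (simp add: eligible_def)
      then have "i \<in> forwarded \<sigma> h v \<tau>" using not_dropped i(4) by force
      then show ?thesis using i(3) by (auto simp: forwarded_def)
    qed (use i in auto)
    then show "i \<in> reaching \<sigma> h (Suc v) D u" using i by (simp add: reaching_def)
  qed
  finally show ?thesis by simp
qed

lemma card_reaching_Suc_saturated:
  assumes below: "card (reaching \<sigma> g (Suc v) D v) \<le> card (reaching \<sigma> h (Suc v) D v)"
    and \<tau>: "D + int v = int \<tau>"
    and dropped: "j \<in> eligible \<sigma> h v \<tau> - forwarded \<sigma> h v \<tau>" "dst (\<sigma>!j) \<le> u"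
  shows "card (reaching \<sigma> g (Suc v) D u) \<le> card (reaching \<sigma> h (Suc v) D u)"
proof -
  let ?E = "eligible \<sigma> h v \<tau>" and ?F = "forwarded \<sigma> h v \<tau>"
  have "?F \<subseteq> ?E" by (rule forwarded_subset_eligible[OF h_le_dist])
  have "card ?F = min c (card ?E)" and nearest: "\<forall>i\<in>?F. \<forall>j\<in>?E - ?F. dst (\<sigma>!i) \<le> dst (\<sigma>!j)"
    using ntg unfolding ntg_run_def by blast+
  moreover have "card ?F \<noteq> card ?E"
    using card_subset_eq[OF finite_eligible \<open>?F \<subseteq> ?E\<close>] dropped(1) by blast
  ultimately have card_F: "card ?F = c" by linarith
  have "card (reaching \<sigma> g (Suc v) D u) \<le> card (reaching \<sigma> g (Suc v) D v \<union> forwarded \<sigma> g v \<tau>)"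
  proof (rule card_mono, simp, rule subsetI)
    fix i assume "i \<in> reaching \<sigma> g (Suc v) D u"
    then have i: "i < length \<sigma>" "diagonal (\<sigma>!i) = D" "src (\<sigma>!i) \<le> v"
      "min (dst (\<sigma>!i)) (Suc v) \<le> src (\<sigma>!i) + g i"
      by (auto simp: reaching_def)
    show "i \<in> reaching \<sigma> g (Suc v) D v \<union> forwarded \<sigma> g v \<tau>"
    proof (cases "dst (\<sigma>!i) \<le> v")
      case True
      then show ?thesis using \<open>i \<in> reaching \<sigma> g (Suc v) D u\<close> by (auto simp: reaching_def)
    next
      case False
      then have "v - src (\<sigma>!i) < g i" using i(3,4) by linarith
      moreover have "present \<sigma> g v \<tau> i"
        using calculation i \<tau> present_iff_on_diagonal[of \<sigma> i v \<tau> g] by simp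
      ultimately show ?thesis by (simp add: forwarded_def)
    qed
  qed
  also have "\<dots> \<le> card (reaching \<sigma> g (Suc v) D v) + card (forwarded \<sigma> g v \<tau>)"
    by (rule card_Un_le)
  also have "\<dots> \<le> card (reaching \<sigma> h (Suc v) D v) + card ?F"
    using below feasible card_F unfolding feasible_schedule_def by (simp add: add_mono)
  also have "\<dots> = card (reaching \<sigma> h (Suc v) D v \<union> ?F)"
    using eligible_before_dst \<open>?F \<subseteq> ?E\<close>
    by (intro card_Un_disjoint[symmetric]) (force simp: reaching_def)+
  also have "\<dots> \<le> card (reaching \<sigma> h (Suc v) D u)"
  proof (rule card_mono[OF finite_reaching], rule subsetI)
    have "v < u" using eligible_before_dst dropped by fastforce
    fix i assume "i \<in> reaching \<sigma> h (Suc v) D v \<union> ?F"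
    then consider "i \<in> reaching \<sigma> h (Suc v) D v" | "i \<in> ?F" by blast
    then show "i \<in> reaching \<sigma> h (Suc v) D u"
    proof cases
      case 1
      then show ?thesis using \<open>v < u\<close> by (auto simp: reaching_def)
    next
      case 2
      then have "present \<sigma> h v \<tau> i" and "v - src (\<sigma>!i) < h i"
        by (auto simp: forwarded_def)
      moreover have "dst (\<sigma>!i) \<le> u" using nearest 2 dropped by force
      ultimately show ?thesis
        using diagonal_if_present[of \<sigma> h v \<tau> i] \<tau> by (auto simp: reaching_def present_def)
    qed
  qed
  finally show ?thesis .
qed

lemma card_reaching_le: "card (reaching \<sigma> g v D u) \<le> card (reaching \<sigma> h v D u)"
proof (induction v arbitrary: u)
  case 0
  show ?case by (simp add: reaching_def)
next
  case (Suc v)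
  show ?case
  proof (cases "D + int v < 0")
    case True
    then have "reaching \<sigma> g (Suc v) D u = {}" by (auto simp: reaching_def diagonal_def)
    then show ?thesis by simp
  next
    case False
    then obtain \<tau> where \<tau>: "D + int v = int \<tau>" by (metis nonneg_int_cases not_less)
    show ?thesis
    proof (cases "\<forall>j \<in> eligible \<sigma> h v \<tau> - forwarded \<sigma> h v \<tau>. u < dst (\<sigma>!j)")
      case True
      then show ?thesis by (rule card_reaching_Suc_unsaturated[OF Suc.IH \<tau>])
    next
      case False
      then obtain j where "j \<in> eligible \<sigma> h v \<tau> - forwarded \<sigma> h v \<tau>" "dst (\<sigma>!j) \<le> u"
        by (auto simp: not_less)
      moreover have "card (reaching \<sigma> g (Suc v) D v) \<le> card (reaching \<sigma> h (Suc v) D v)"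
        using card_reaching_Suc_unsaturated[OF Suc.IH \<tau>] eligible_before_dst by blast
      ultimately show ?thesis using card_reaching_Suc_saturated[OF _ \<tau>] by blast
    qed
  qed
qed

lemma card_delivered_le:
  assumes "\<And>i. i < length \<sigma> \<Longrightarrow> dst (\<sigma>!i) < n"
  shows "card {i. i < length \<sigma> \<and> g i = dist (\<sigma>!i)} \<le> card {i. i < length \<sigma> \<and> h i = dist (\<sigma>!i)}"
proof -
  let ?diagonals = "(\<lambda>i. diagonal (\<sigma>!i)) ` {..<length \<sigma>}"
  have "card {i. i < length \<sigma> \<and> f i = dist (\<sigma>!i)} = (\<Sum>D\<in>?diagonals. card (reaching \<sigma> f n D n))"
    if "\<And>i. i < length \<sigma> \<Longrightarrow> f i \<le> dist (\<sigma>!i)" for f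
    using card_eq_sum_card_fibres[of _ ?diagonals "\<lambda>i. diagonal (\<sigma>!i)"]
      reaching_beyond_all_dst[of \<sigma> n f] that src_le_dst assms
    by (simp add: image_subset_iff conj_assoc)
  then show ?thesis
    using g_le_dist h_le_dist card_reaching_le by (simp add: sum_mono)
qed

end

lemma throughput_eq_card_delivered:
  assumes "\<forall>r\<in>set \<sigma>. valid_request n r"
  shows "throughput \<sigma> f = card {i. i < length \<sigma> \<and> f i = dist (\<sigma>!i)}"
  unfolding throughput_def using valid_requestsD(3)[OF assms]
  by (intro arg_cong[where f = card]) auto

lemma opt_throughput_eqI:
  assumes "feasible_schedule c \<sigma> h"
    and "\<And>g. feasible_schedule c \<sigma> g \<Longrightarrow> throughput \<sigma> g \<le> throughput \<sigma> h"
  shows "opt_throughput c \<sigma> = throughput \<sigma> h"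
proof -
  let ?S = "{throughput \<sigma> g | g. feasible_schedule c \<sigma> g}"
  have "throughput \<sigma> g \<le> card {..<length \<sigma>}" for g
    unfolding throughput_def by (rule card_mono) auto
  then have "?S \<subseteq> {..length \<sigma>}" by auto
  then have "finite ?S" by (rule finite_subset) simp
  moreover have "\<And>x. x \<in> ?S \<Longrightarrow> x \<le> throughput \<sigma> h" using assms(2) by blast
  moreover have "throughput \<sigma> h \<in> ?S" using assms(1) by blast
  ultimately show ?thesis unfolding opt_throughput_def by (rule Max_eqI)
qed

theorem mainTheorem4:
  fixes n c :: nat and \<sigma> :: "request list"
  assumes "c \<ge> 1"
    and "\<forall>r \<in> set \<sigma>. valid_request n r"
  shows "(\<exists>h. ntg_run c \<sigma> h) \<and>
         (\<forall>h. ntg_run c \<sigma> h \<longrightarrow> throughput \<sigma> h = opt_throughput c \<sigma>)"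
proof (intro conjI allI impI)
  show "\<exists>h. ntg_run c \<sigma> h" using ntg_run_ntg_prefix[OF assms(2)] by blast
next
  fix h assume ntg: "ntg_run c \<sigma> h"
  have "throughput \<sigma> g \<le> throughput \<sigma> h" if "feasible_schedule c \<sigma> g" for g
  proof -
    interpret ntg_vs_feasible \<sigma> c h g
      using valid_requestsD(1)[OF assms(2)] ntg that by unfold_locales
    show ?thesis
      unfolding throughput_eq_card_delivered[OF assms(2)]
      using card_delivered_le valid_requestsD(2)[OF assms(2)] by blast
  qed
  moreover have "feasible_schedule c \<sigma> h" using ntg by (simp add: ntg_run_def)
  ultimately show "throughput \<sigma> h = opt_throughput c \<sigma>" by (simp add: opt_throughput_eqI)
qed

end
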